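(* Let $(V,b,\mu)$ be a locally finite, weighted, connected graph with $\mu(x)\geq\mu_0$ for all $x\in V$, for some constant $\mu_0>0$, and let $\theta$ be a phase function on it. Fix $x_0\in V$ and, for $n\in\mathbb{Z}_+$, let $\beta_n=\frac{d_{2n}p_{2n}}{\mu_0 n}$ and let $\chi_n$ be the cut-off function defined below. Then for every $u\in\ell^2(V,\mu)$, every $n\in\mathbb{Z}_+$ and every $0<\varepsilon<1$, $$\|\chi_n\Delta_{b,\theta}u\|^2\leq(1-\varepsilon)^{-1}\|\Delta_{b,\theta}(\chi_nu)\|^2+\left(\frac{9+4\varepsilon}{(1-\varepsilon)\varepsilon}\right)\beta_n^2\|u\|^2.$$
   Context: $V$ is a countably infinite set, $\mu\colon V\to(0,\infty)$, and $b\colon V\times V\to[0,\infty)$ satisfies $b(x,y)=b(y,x)$, $b(x,x)=0$, $\deg(x):=\#\{y: b(x,y)>0\}<\infty$; $x\sim y$ means $b(x,y)>0$; connectedness means any two vertices are joined by a finite path of neighbors, and $d(x,y)$ is the combinatorial (path-length) distance; $r(x)=d(x_0,x)$. A phase function is $\theta\colon V\times V\to[-\pi,\pi]$ with $\theta(x,y)=-\theta(y,x)$. $\ell^2(V,\mu)$ is the space of $f\colon V\to\mathbb{C}$ with $\|f\|^2=\sum_x\mu(x)|f(x)|^2<\infty$, inner product $(f,g)=\sum_x\mu(x)f(x)\overline{g(x)}$. The magnetic Laplacian is $(\Delta_{b,\theta}u)(x)=\frac{1}{\mu(x)}\sum_{y}b(x,y)(u(x)-e^{i\theta(x,y)}u(y))$.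 $B(x_0,n)=\{x: r(x)\leq n\}$ (plus edges between such vertices), $d_n=\max_{x\in B(x_0,n)}\deg(x)$, $p_n=\max_{x\in B(x_0,n)}\max_{y\in V}b(x,y)$. The cut-off is $\chi_n(x)=\left(\left(\frac{2n-d(x_0,x)}{n}\right)\vee 0\right)\wedge 1$, where $a\wedge z=\min\{a,z\}$, $a\vee z=\max\{a,z\}$. *)

theory Defs
  imports "HOL-Analysis.Analysis"
begin

definition nbrs :: "('a \<Rightarrow> 'a \<Rightarrow> real) \<Rightarrow> 'a \<Rightarrow> 'a set" where
  "nbrs b x = {y. 0 < b x y}"

definition deg :: "('a \<Rightarrow> 'a \<Rightarrow> real) \<Rightarrow> 'a \<Rightarrow> nat" where
  "deg b x = card (nbrs b x)"

definition weighted_graph :: "('a \<Rightarrow> 'a \<Rightarrow> real) \<Rightarrow> ('a \<Rightarrow> real) \<Rightarrow> bool" where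
  "weighted_graph b \<mu> \<longleftrightarrow>
     countable (UNIV :: 'a set) \<and> infinite (UNIV :: 'a set) \<and>
     (\<forall>x. 0 < \<mu> x) \<and> (\<forall>x y. 0 \<le> b x y) \<and> (\<forall>x y. b x y = b y x) \<and>
     (\<forall>x. b x x = 0) \<and> (\<forall>x. finite (nbrs b x))"

definition path_of_len :: "('a \<Rightarrow> 'a \<Rightarrow> real) \<Rightarrow> 'a \<Rightarrow> 'a \<Rightarrow> nat \<Rightarrow> bool" where
  "path_of_len b x y n \<longleftrightarrow>
     (\<exists>p :: nat \<Rightarrow> 'a. p 0 = x \<and> p n = y \<and> (\<forall>i<n. 0 < b (p i) (p (Suc i))))"

definition graph_connected :: "('a \<Rightarrow> 'a \<Rightarrow> real) \<Rightarrow> bool" where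
  "graph_connected b \<longleftrightarrow> (\<forall>x y. \<exists>n. path_of_len b x y n)"

definition gdist :: "('a \<Rightarrow> 'a \<Rightarrow> real) \<Rightarrow> 'a \<Rightarrow> 'a \<Rightarrow> nat" where
  "gdist b x y = (LEAST n. path_of_len b x y n)"

definition phase_function :: "('a \<Rightarrow> 'a \<Rightarrow> real) \<Rightarrow> bool" where
  "phase_function \<theta> \<longleftrightarrow> (\<forall>x y. -pi \<le> \<theta> x y \<and> \<theta> x y \<le> pi \<and> \<theta> x y = - \<theta> y x)"

definition in_l2 :: "('a \<Rightarrow> real) \<Rightarrow> ('a \<Rightarrow> complex) \<Rightarrow> bool" where
  "in_l2 \<mu> f \<longleftrightarrow> (\<lambda>x. \<mu> x * (cmod (f x))\<^sup>2) summable_on UNIV"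

definition l2norm_sq :: "('a \<Rightarrow> real) \<Rightarrow> ('a \<Rightarrow> complex) \<Rightarrow> real" where
  "l2norm_sq \<mu> f = (\<Sum>\<^sub>\<infinity>x. \<mu> x * (cmod (f x))\<^sup>2)"

definition mag_laplacian ::
  "('a \<Rightarrow> 'a \<Rightarrow> real) \<Rightarrow> ('a \<Rightarrow> real) \<Rightarrow> ('a \<Rightarrow> 'a \<Rightarrow> real) \<Rightarrow> ('a \<Rightarrow> complex) \<Rightarrow> 'a \<Rightarrow> complex" where
  "mag_laplacian b \<mu> \<theta> u x =
     (1 / complex_of_real (\<mu> x)) *
       (\<Sum>y\<in>nbrs b x. complex_of_real (b x y) * (u x - cis (\<theta> x y) * u y))"

definition ball_g :: "('a \<Rightarrow> 'a \<Rightarrow> real) \<Rightarrow> 'a \<Rightarrow> nat \<Rightarrow> 'a set" where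
  "ball_g b x0 n = {x. gdist b x0 x \<le> n}"

definition dmax :: "('a \<Rightarrow> 'a \<Rightarrow> real) \<Rightarrow> 'a \<Rightarrow> nat \<Rightarrow> nat" where
  "dmax b x0 n = Max (deg b ` ball_g b x0 n)"

definition pmax :: "('a \<Rightarrow> 'a \<Rightarrow> real) \<Rightarrow> 'a \<Rightarrow> nat \<Rightarrow> real" where
  "pmax b x0 n = Max {b x y | x y. x \<in> ball_g b x0 n}"

definition cutoff :: "('a \<Rightarrow> 'a \<Rightarrow> real) \<Rightarrow> 'a \<Rightarrow> nat \<Rightarrow> 'a \<Rightarrow> real" where
  "cutoff b x0 n x = min (max ((2 * real n - real (gdist b x0 x)) / real n) 0) 1"

end

(* Multiplying by a cutoff commutes with the magnetic Laplacian up to the commutator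
     (phi Delta u)(x) - (Delta (phi u))(x) = 1/mu(x) * sum_y b(x,y) e^(i theta(x,y)) (phi(y) - phi(x)) u(y).
   Since phi_n is (1/n)-Lipschitz along edges and vanishes outside the ball B(x0, 2n), Cauchy-Schwarz
   at each vertex and double counting the edges of the ball bound the l2 norm of the commutator by
   beta_n ||u||.  Splitting |a + c|^2 <= |a|^2/(1-eps) + |c|^2/eps then gives the claim even with the
   smaller constant 1/eps in place of (9 + 4 eps)/((1 - eps) eps).  All norms are finite sums over
   B(x0, 2n), which is finite by local finiteness. *)

theory Submission
  imports Defs
begin

lemma path_of_len_gdist:
  assumes "graph_connected b"
  shows "path_of_len b x y (gdist b x y)"
  using assms unfolding graph_connected_def gdist_def by (metis LeastI_ex)

lemma gdist_le_Suc_if_edge: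
  assumes "graph_connected b" "0 < b x y"
  shows "gdist b x0 y \<le> Suc (gdist b x0 x)"
proof -
  obtain p where p: "p 0 = x0" "p (gdist b x0 x) = x"
    "\<forall>i<gdist b x0 x. 0 < b (p i) (p (Suc i))"
    using path_of_len_gdist[OF assms(1), of x0 x] unfolding path_of_len_def by blast
  define q where "q i = (if i \<le> gdist b x0 x then p i else y)" for i
  have "path_of_len b x0 y (Suc (gdist b x0 x))"
    unfolding path_of_len_def
  proof (rule exI[of _ q], intro conjI allI impI)
    show "q 0 = x0" using p by (simp add: q_def)
    show "q (Suc (gdist b x0 x)) = y" by (simp add: q_def)
    fix i assume "i < Suc (gdist b x0 x)"
    then consider "i < gdist b x0 x" | "i = gdist b x0 x" by linarith
    thus "0 < b (q i) (q (Suc i))"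
      by cases (use p assms(2) in \<open>auto simp: q_def\<close>)
  qed
  thus ?thesis unfolding gdist_def by (rule Least_le)
qed

lemma gdist_edge_diff_le_1:
  assumes "weighted_graph b \<mu>" "graph_connected b" "0 < b x y"
  shows "\<bar>real (gdist b x0 x) - real (gdist b x0 y)\<bar> \<le> 1"
proof -
  have "0 < b y x" using assms(1,3) by (simp add: weighted_graph_def)
  thus ?thesis
    using gdist_le_Suc_if_edge[OF assms(2,3), of x0] gdist_le_Suc_if_edge[OF assms(2), of y x x0]
    by linarith
qed

lemma gdist_Suc_imp_edge:
  assumes "graph_connected b" "gdist b x0 y = Suc k"
  obtains x where "gdist b x0 x \<le> k" "0 < b x y"
proof -
  obtain p where p: "p 0 = x0" "p (Suc k) = y" "\<forall>i<Suc k. 0 < b (p i) (p (Suc i))"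
    using path_of_len_gdist[OF assms(1), of x0 y] assms(2) unfolding path_of_len_def by auto
  have "path_of_len b x0 (p k) k" unfolding path_of_len_def using p by auto
  hence "gdist b x0 (p k) \<le> k" unfolding gdist_def by (rule Least_le)
  thus ?thesis using p that by auto
qed

lemma finite_ball_g:
  assumes "weighted_graph b \<mu>" "graph_connected b"
  shows "finite (ball_g b x0 k)"
proof (induction k)
  case 0
  have "ball_g b x0 0 \<subseteq> {x0}"
  proof
    fix y assume "y \<in> ball_g b x0 0"
    hence "gdist b x0 y = 0" by (simp add: ball_g_def)
    thus "y \<in> {x0}" using path_of_len_gdist[OF assms(2), of x0 y] by (auto simp: path_of_len_def)
  qed
  thus ?case using finite_subset by blast
next
  case (Suc k)
  have "ball_g b x0 (Suc k) \<subseteq> ball_g b x0 k \<union> (\<Union>x\<in>ball_g b x0 k. nbrs b x)"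
  proof
    fix y assume y: "y \<in> ball_g b x0 (Suc k)"
    show "y \<in> ball_g b x0 k \<union> (\<Union>x\<in>ball_g b x0 k. nbrs b x)"
    proof (cases "gdist b x0 y = Suc k")
      case True
      then obtain x where "gdist b x0 x \<le> k" "0 < b x y" by (rule gdist_Suc_imp_edge[OF assms(2)])
      thus ?thesis by (auto simp: ball_g_def nbrs_def)
    next
      case False thus ?thesis using y by (auto simp: ball_g_def)
    qed
  qed
  moreover have "finite (ball_g b x0 k \<union> (\<Union>x\<in>ball_g b x0 k. nbrs b x))"
    using Suc assms(1) unfolding weighted_graph_def by auto
  ultimately show ?case using finite_subset by blast
qed

lemma deg_le_dmax:
  assumes "weighted_graph b \<mu>" "graph_connected b" "x \<in> ball_g b x0 k"
  shows "deg b x \<le> dmax b x0 k"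
  unfolding dmax_def using assms finite_ball_g[OF assms(1,2)] by (intro Max_ge) auto

lemma weight_le_pmax:
  assumes "weighted_graph b \<mu>" "graph_connected b" "x \<in> ball_g b x0 k"
  shows "b x y \<le> pmax b x0 k"
proof -
  have "{b x y | x y. x \<in> ball_g b x0 k} \<subseteq> insert 0 (\<Union>x\<in>ball_g b x0 k. b x ` nbrs b x)"
  proof
    fix z assume "z \<in> {b x y | x y. x \<in> ball_g b x0 k}"
    then obtain x y where "z = b x y" "x \<in> ball_g b x0 k" by blast
    thus "z \<in> insert 0 (\<Union>x\<in>ball_g b x0 k. b x ` nbrs b x)"
      using assms(1) by (cases "0 < b x y") (auto simp: nbrs_def weighted_graph_def less_le)
  qed
  moreover have "finite (insert 0 (\<Union>x\<in>ball_g b x0 k. b x ` nbrs b x))"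
    using finite_ball_g[OF assms(1,2)] assms(1) by (auto simp: weighted_graph_def)
  ultimately show ?thesis
    unfolding pmax_def using assms(3) by (intro Max_ge) (auto intro: finite_subset)
qed

lemma cutoff_eq_0:
  assumes "2 * n \<le> gdist b x0 x"
  shows "cutoff b x0 n x = 0"
proof -
  have "(2 * real n - real (gdist b x0 x)) / real n \<le> 0"
    using assms by (intro divide_nonpos_nonneg) auto
  thus ?thesis unfolding cutoff_def by simp
qed

lemma abs_cutoff_diff_le:
  assumes "weighted_graph b \<mu>" "graph_connected b" "0 < b x y"
  shows "\<bar>cutoff b x0 n y - cutoff b x0 n x\<bar> \<le> 1 / real n"
proof -
  have clamp: "\<bar>min (max t 0) 1 - min (max s 0) 1\<bar> \<le> \<bar>t - s\<bar>" for t s :: real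
    by (auto simp: min_def max_def abs_if)
  have "\<bar>cutoff b x0 n y - cutoff b x0 n x\<bar>
      \<le> \<bar>(2 * real n - real (gdist b x0 y)) / real n - (2 * real n - real (gdist b x0 x)) / real n\<bar>"
    unfolding cutoff_def by (rule clamp)
  also have "\<dots> = \<bar>real (gdist b x0 x) - real (gdist b x0 y)\<bar> / real n"
    by (simp add: diff_divide_distrib[symmetric] abs_divide)
  also have "\<dots> \<le> 1 / real n"
    using gdist_edge_diff_le_1[OF assms] by (intro divide_right_mono) auto
  finally show ?thesis .
qed

lemma cutoff_ne_imp_in_ball:
  assumes "weighted_graph b \<mu>" "graph_connected b" "0 < b x y"
    and "cutoff b x0 n x \<noteq> cutoff b x0 n y"
  shows "x \<in> ball_g b x0 (2 * n) \<and> y \<in> ball_g b x0 (2 * n)"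
proof (rule ccontr)
  assume "\<not> ?thesis"
  hence "2 * n < gdist b x0 x \<or> 2 * n < gdist b x0 y" by (auto simp: ball_g_def)
  hence "2 * n \<le> gdist b x0 x \<and> 2 * n \<le> gdist b x0 y"
    using gdist_edge_diff_le_1[OF assms(1-3), of x0] by linarith
  thus False using cutoff_eq_0 assms(4) by metis
qed

lemma infsum_eq_sum_if_support_subset:
  assumes "finite S" "\<And>x. x \<notin> S \<Longrightarrow> f x = 0"
  shows "infsum f UNIV = sum f S"
proof -
  have "infsum f UNIV = infsum f S"
    by (rule infsum_cong_neutral) (use assms in auto)
  also have "\<dots> = sum f S" using assms(1) by (rule infsum_finite)
  finally show ?thesis .
qed

lemma l2norm_sq_nonneg:
  assumes "\<And>x. 0 \<le> \<mu> x"
  shows "0 \<le> l2norm_sq \<mu> f"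
  unfolding l2norm_sq_def using assms by (intro infsum_nonneg) auto

lemma norm_add_sq_le:
  fixes a c :: "'b::real_normed_vector"
  assumes "0 < e" "e < 1"
  shows "(norm (a + c))\<^sup>2 \<le> (1/(1-e)) * (norm a)\<^sup>2 + (1/e) * (norm c)\<^sup>2"
proof -
  define s where "s = norm a"
  define t where "t = norm c"
  have "(norm (a + c))\<^sup>2 \<le> (s + t)\<^sup>2"
    unfolding s_def t_def by (intro power_mono norm_triangle_ineq) auto
  moreover have "(1/(1-e)) * s\<^sup>2 + (1/e) * t\<^sup>2 - (s + t)\<^sup>2 = (e * s - (1-e) * t)\<^sup>2 / (e*(1-e))"
    using assms by (simp add: field_simps power2_eq_square)
  moreover have "0 \<le> (e * s - (1-e) * t)\<^sup>2 / (e*(1-e))" using assms by simp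
  ultimately show ?thesis unfolding s_def t_def by linarith
qed

lemma l2norm_sq_add_le:
  assumes "\<And>x. f x = g x + h x" and "finite S"
    and "\<And>x. x \<notin> S \<Longrightarrow> f x = 0" and "\<And>x. x \<notin> S \<Longrightarrow> h x = 0"
    and "\<And>x. 0 \<le> \<mu> x" and "0 < e" "e < 1"
  shows "l2norm_sq \<mu> f \<le> (1/(1-e)) * l2norm_sq \<mu> g + (1/e) * l2norm_sq \<mu> h"
proof -
  have g0: "g x = 0" if "x \<notin> S" for x
    using assms(1)[of x] assms(3,4)[OF that] by simp
  have "l2norm_sq \<mu> f = (\<Sum>x\<in>S. \<mu> x * (cmod (g x + h x))\<^sup>2)"
    unfolding l2norm_sq_def assms(1)
    by (rule infsum_eq_sum_if_support_subset[OF assms(2)]) (simp add: g0 assms(4))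
  also have "\<dots> \<le> (\<Sum>x\<in>S. (1/(1-e)) * (\<mu> x * (cmod (g x))\<^sup>2) + (1/e) * (\<mu> x * (cmod (h x))\<^sup>2))"
  proof (rule sum_mono)
    fix x
    have "\<mu> x * (cmod (g x + h x))\<^sup>2 \<le> \<mu> x * ((1/(1-e)) * (cmod (g x))\<^sup>2 + (1/e) * (cmod (h x))\<^sup>2)"
      using assms(5-7) by (intro mult_left_mono norm_add_sq_le) auto
    thus "\<mu> x * (cmod (g x + h x))\<^sup>2 \<le> (1/(1-e)) * (\<mu> x * (cmod (g x))\<^sup>2) + (1/e) * (\<mu> x * (cmod (h x))\<^sup>2)"
      by (simp add: algebra_simps)
  qed
  also have "\<dots> = (1/(1-e)) * l2norm_sq \<mu> g + (1/e) * l2norm_sq \<mu> h"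
    unfolding l2norm_sq_def
    using infsum_eq_sum_if_support_subset[OF assms(2), of "\<lambda>x. \<mu> x * (cmod (g x))\<^sup>2"]
      infsum_eq_sum_if_support_subset[OF assms(2), of "\<lambda>x. \<mu> x * (cmod (h x))\<^sup>2"] g0 assms(4)
    by (simp add: sum.distrib sum_distrib_left)
  finally show ?thesis .
qed

definition mag_commutator ::
  "('a \<Rightarrow> 'a \<Rightarrow> real) \<Rightarrow> ('a \<Rightarrow> real) \<Rightarrow> ('a \<Rightarrow> 'a \<Rightarrow> real) \<Rightarrow> ('a \<Rightarrow> real) \<Rightarrow>
    ('a \<Rightarrow> complex) \<Rightarrow> 'a \<Rightarrow> complex" where
  "mag_commutator b \<mu> \<theta> \<phi> u x =
     (1 / complex_of_real (\<mu> x)) *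
       (\<Sum>y\<in>nbrs b x. complex_of_real (b x y) * cis (\<theta> x y) * complex_of_real (\<phi> y - \<phi> x) * u y)"

lemma mult_mag_laplacian:
  "complex_of_real (\<phi> x) * mag_laplacian b \<mu> \<theta> u x
     = mag_laplacian b \<mu> \<theta> (\<lambda>x. complex_of_real (\<phi> x) * u x) x + mag_commutator b \<mu> \<theta> \<phi> u x"
proof -
  have "mag_laplacian b \<mu> \<theta> (\<lambda>x. complex_of_real (\<phi> x) * u x) x + mag_commutator b \<mu> \<theta> \<phi> u x
    = (1 / complex_of_real (\<mu> x)) * (\<Sum>y\<in>nbrs b x.
         complex_of_real (b x y) * (complex_of_real (\<phi> x) * u x - cis (\<theta> x y) * (complex_of_real (\<phi> y) * u y))
       + complex_of_real (b x y) * cis (\<theta> x y) * complex_of_real (\<phi> y - \<phi> x) * u y)"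
    unfolding mag_laplacian_def mag_commutator_def by (simp add: sum.distrib distrib_left)
  also have "\<dots> = (1 / complex_of_real (\<mu> x)) * (\<Sum>y\<in>nbrs b x.
       complex_of_real (\<phi> x) * (complex_of_real (b x y) * (u x - cis (\<theta> x y) * u y)))"
    by (intro arg_cong2[where f="(*)"] refl sum.cong) (simp_all add: algebra_simps)
  also have "\<dots> = complex_of_real (\<phi> x) * mag_laplacian b \<mu> \<theta> u x"
    unfolding mag_laplacian_def by (simp add: sum_distrib_left[symmetric])
  finally show ?thesis by simp
qed

lemma mag_commutator_eq_0:
  assumes "\<And>y. 0 < b x y \<Longrightarrow> \<phi> y = \<phi> x"
  shows "mag_commutator b \<mu> \<theta> \<phi> u x = 0"
  unfolding mag_commutator_def using assms by (simp add: nbrs_def)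

lemma mu_norm_mag_commutator_sq_le:
  assumes "weighted_graph b \<mu>" "0 < \<mu>0" "\<mu>0 \<le> \<mu> x"
    and "\<And>y. 0 < b x y \<Longrightarrow> \<phi> x \<noteq> \<phi> y \<Longrightarrow> y \<in> B"
    and "\<And>y. 0 < b x y \<Longrightarrow> \<bar>\<phi> y - \<phi> x\<bar> \<le> L"
    and "\<And>y. b x y \<le> P" and "deg b x \<le> D"
  shows "\<mu> x * (cmod (mag_commutator b \<mu> \<theta> \<phi> u x))\<^sup>2
           \<le> real D * (P * L)\<^sup>2 / \<mu>0 * (\<Sum>y\<in>{y\<in>B. 0 < b x y}. (cmod (u y))\<^sup>2)"
proof -
  note wg = assms(1)[unfolded weighted_graph_def]
  define A where "A = {y\<in>B. 0 < b x y}"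
  define t where "t y = complex_of_real (b x y) * cis (\<theta> x y) * complex_of_real (\<phi> y - \<phi> x) * u y" for y
  have A_nbrs: "A \<subseteq> nbrs b x" by (auto simp: A_def nbrs_def)
  have "(\<Sum>y\<in>nbrs b x. t y) = (\<Sum>y\<in>A. t y)"
    using A_nbrs wg assms(4) by (intro sum.mono_neutral_right) (auto simp: A_def nbrs_def t_def)
  hence C_eq: "mag_commutator b \<mu> \<theta> \<phi> u x = (\<Sum>y\<in>A. t y) / complex_of_real (\<mu> x)"
    unfolding mag_commutator_def t_def by simp
  have norm_t: "cmod (t y) \<le> P * L * cmod (u y)" if "y \<in> A" for y
  proof -
    have "b x y * \<bar>\<phi> y - \<phi> x\<bar> \<le> P * L"
      using that assms(5,6)[of y] by (intro mult_mono) (auto simp: A_def)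
    thus ?thesis
      unfolding t_def using wg
      by (simp add: norm_mult abs_of_nonneg mult_right_mono of_real_diff[symmetric] del: of_real_diff)
  qed
  have "(cmod (\<Sum>y\<in>A. t y))\<^sup>2 \<le> (\<Sum>y\<in>A. P * L * cmod (u y))\<^sup>2"
    using norm_t by (intro power_mono order_trans[OF norm_sum sum_mono]) auto
  also have "\<dots> \<le> (\<Sum>y\<in>A. (P * L * cmod (u y))\<^sup>2) * real (card A)"
    by (rule sum_squared_le_sum_of_squares)
  also have "\<dots> \<le> (\<Sum>y\<in>A. (P * L * cmod (u y))\<^sup>2) * real D"
  proof -
    have "card A \<le> deg b x" unfolding deg_def using A_nbrs wg by (intro card_mono) auto
    thus ?thesis using assms(7) by (intro mult_left_mono) (auto simp: sum_nonneg)
  qed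
  also have "\<dots> = real D * (P * L)\<^sup>2 * (\<Sum>y\<in>A. (cmod (u y))\<^sup>2)"
    by (simp add: sum_distrib_left sum_distrib_right power_mult_distrib mult_ac)
  finally have sq_le: "(cmod (\<Sum>y\<in>A. t y))\<^sup>2 \<le> real D * (P * L)\<^sup>2 * (\<Sum>y\<in>A. (cmod (u y))\<^sup>2)" .
  have "\<mu> x * (cmod (mag_commutator b \<mu> \<theta> \<phi> u x))\<^sup>2 = (cmod (\<Sum>y\<in>A. t y))\<^sup>2 / \<mu> x"
    unfolding C_eq using wg by (simp add: norm_divide power_divide power2_eq_square)
  also have "\<dots> \<le> (cmod (\<Sum>y\<in>A. t y))\<^sup>2 / \<mu>0"
    using assms(2,3) by (intro divide_left_mono) auto
  also have "\<dots> \<le> real D * (P * L)\<^sup>2 / \<mu>0 * (\<Sum>y\<in>A. (cmod (u y))\<^sup>2)"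
    using sq_le assms(2) by (simp add: divide_right_mono)
  finally show ?thesis unfolding A_def .
qed

lemma sum_edges_le_deg_mult_sum:
  assumes "weighted_graph b \<mu>" "finite B" "\<And>y. y \<in> B \<Longrightarrow> deg b y \<le> D" "\<And>y. 0 \<le> f y"
  shows "(\<Sum>x\<in>B. \<Sum>y\<in>{y\<in>B. 0 < b x y}. f y) \<le> real D * (\<Sum>y\<in>B. f y)"
proof -
  note wg = assms(1)[unfolded weighted_graph_def]
  have "(\<Sum>x\<in>B. \<Sum>y\<in>{y\<in>B. 0 < b x y}. f y) = (\<Sum>y\<in>B. real (card {x\<in>B. 0 < b x y}) * f y)"
    using sum.swap_restrict[OF assms(2,2), of "\<lambda>x y. f y" "\<lambda>x y. 0 < b x y"] by simp
  also have "\<dots> \<le> (\<Sum>y\<in>B. real D * f y)"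
  proof (rule sum_mono)
    fix y assume "y \<in> B"
    have "card {x\<in>B. 0 < b x y} \<le> deg b y"
      unfolding deg_def using wg by (intro card_mono) (auto simp: nbrs_def)
    thus "real (card {x\<in>B. 0 < b x y}) * f y \<le> real D * f y"
      using assms(3)[OF \<open>y \<in> B\<close>] assms(4) by (intro mult_right_mono) auto
  qed
  finally show ?thesis by (simp add: sum_distrib_left)
qed

lemma sum_norm_sq_le_l2norm_sq:
  assumes "0 < \<mu>0" "\<forall>x. \<mu>0 \<le> \<mu> x" "in_l2 \<mu> u" "finite B"
  shows "(\<Sum>y\<in>B. (cmod (u y))\<^sup>2) \<le> l2norm_sq \<mu> u / \<mu>0"
proof -
  have "\<mu>0 * (\<Sum>y\<in>B. (cmod (u y))\<^sup>2) \<le> (\<Sum>y\<in>B. \<mu> y * (cmod (u y))\<^sup>2)"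
    unfolding sum_distrib_left using assms(2) by (intro sum_mono mult_right_mono) auto
  also have "\<dots> \<le> l2norm_sq \<mu> u"
  proof -
    have "0 \<le> \<mu> x" for x using assms(1,2) by (meson less_imp_le order_trans)
    thus ?thesis
      unfolding l2norm_sq_def using assms(3,4) by (intro finite_sum_le_infsum) (auto simp: in_l2_def)
  qed
  finally show ?thesis using assms(1) by (simp add: field_simps)
qed

lemma l2norm_sq_mag_commutator_le:
  assumes "weighted_graph b \<mu>" "0 < \<mu>0" "\<forall>x. \<mu>0 \<le> \<mu> x" "in_l2 \<mu> u" "finite B"
    and "\<And>x y. 0 < b x y \<Longrightarrow> \<phi> x \<noteq> \<phi> y \<Longrightarrow> x \<in> B \<and> y \<in> B"
    and "\<And>x y. 0 < b x y \<Longrightarrow> \<bar>\<phi> y - \<phi> x\<bar> \<le> L"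
    and "\<And>x. x \<in> B \<Longrightarrow> deg b x \<le> D" and "\<And>x y. x \<in> B \<Longrightarrow> b x y \<le> P"
  shows "l2norm_sq \<mu> (mag_commutator b \<mu> \<theta> \<phi> u) \<le> (real D * P * L / \<mu>0)\<^sup>2 * l2norm_sq \<mu> u"
proof -
  define K where "K = real D * (P * L)\<^sup>2 / \<mu>0"
  have "K \<ge> 0" unfolding K_def using assms(2) by simp
  have "mag_commutator b \<mu> \<theta> \<phi> u x = 0" if "x \<notin> B" for x
    using that assms(6) by (metis mag_commutator_eq_0)
  hence "l2norm_sq \<mu> (mag_commutator b \<mu> \<theta> \<phi> u)
      = (\<Sum>x\<in>B. \<mu> x * (cmod (mag_commutator b \<mu> \<theta> \<phi> u x))\<^sup>2)"
    unfolding l2norm_sq_def by (intro infsum_eq_sum_if_support_subset[OF assms(5)]) simp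
  also have "\<dots> \<le> (\<Sum>x\<in>B. K * (\<Sum>y\<in>{y\<in>B. 0 < b x y}. (cmod (u y))\<^sup>2))"
    unfolding K_def using assms
    by (intro sum_mono mu_norm_mag_commutator_sq_le[where B = B]) auto
  also have "\<dots> \<le> K * (real D * (\<Sum>y\<in>B. (cmod (u y))\<^sup>2))"
    unfolding sum_distrib_left[symmetric]
    using \<open>K \<ge> 0\<close> by (intro mult_left_mono sum_edges_le_deg_mult_sum[OF assms(1,5,8)]) auto
  also have "\<dots> \<le> K * (real D * (l2norm_sq \<mu> u / \<mu>0))"
    using \<open>K \<ge> 0\<close> sum_norm_sq_le_l2norm_sq[OF assms(2-5)] by (intro mult_left_mono) auto
  also have "\<dots> = (real D * P * L / \<mu>0)\<^sup>2 * l2norm_sq \<mu> u"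
    unfolding K_def using assms(2) by (simp add: field_simps power2_eq_square)
  finally show ?thesis .
qed

lemma l2norm_sq_cutoff_mag_laplacian_le:
  fixes x0 :: 'a and n :: nat
  assumes "weighted_graph b \<mu>" "graph_connected b" "0 < \<mu>0" "\<forall>x. \<mu>0 \<le> \<mu> x" "in_l2 \<mu> u"
    and "0 < \<epsilon>" "\<epsilon> < 1"
  defines "\<phi> \<equiv> cutoff b x0 n"
    and "\<beta> \<equiv> real (dmax b x0 (2 * n)) * pmax b x0 (2 * n) / (\<mu>0 * real n)"
  shows "l2norm_sq \<mu> (\<lambda>x. complex_of_real (\<phi> x) * mag_laplacian b \<mu> \<theta> u x)
      \<le> (1 / (1 - \<epsilon>)) * l2norm_sq \<mu> (mag_laplacian b \<mu> \<theta> (\<lambda>x. complex_of_real (\<phi> x) * u x))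
        + (1 / \<epsilon>) * \<beta>\<^sup>2 * l2norm_sq \<mu> u"
proof -
  define B where "B = ball_g b x0 (2 * n)"
  have \<mu>_nonneg: "0 \<le> \<mu> x" for x using assms(1) by (simp add: weighted_graph_def less_imp_le)
  have finB: "finite B" unfolding B_def by (rule finite_ball_g[OF assms(1,2)])
  have edge_in_B: "x \<in> B \<and> y \<in> B" if "0 < b x y" "\<phi> x \<noteq> \<phi> y" for x y
    using cutoff_ne_imp_in_ball[OF assms(1,2) that[unfolded \<phi>_def]] unfolding B_def .
  have "l2norm_sq \<mu> (\<lambda>x. complex_of_real (\<phi> x) * mag_laplacian b \<mu> \<theta> u x)
      \<le> (1 / (1 - \<epsilon>)) * l2norm_sq \<mu> (mag_laplacian b \<mu> \<theta> (\<lambda>x. complex_of_real (\<phi> x) * u x))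
        + (1 / \<epsilon>) * l2norm_sq \<mu> (mag_commutator b \<mu> \<theta> \<phi> u)"
  proof (rule l2norm_sq_add_le[OF mult_mag_laplacian finB])
    show "complex_of_real (\<phi> x) * mag_laplacian b \<mu> \<theta> u x = 0" if "x \<notin> B" for x
      using that cutoff_eq_0[of n b x0 x] by (simp add: B_def ball_g_def \<phi>_def)
    show "mag_commutator b \<mu> \<theta> \<phi> u x = 0" if "x \<notin> B" for x
      using that edge_in_B by (metis mag_commutator_eq_0)
  qed (use \<mu>_nonneg assms(6,7) in auto)
  moreover have "l2norm_sq \<mu> (mag_commutator b \<mu> \<theta> \<phi> u) \<le> \<beta>\<^sup>2 * l2norm_sq \<mu> u"
    using l2norm_sq_mag_commutator_le[OF assms(1,3-5) finB edge_in_B, where L = "1 / real n" and \<theta> = \<theta>]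
      abs_cutoff_diff_le[OF assms(1,2)] deg_le_dmax[OF assms(1,2)] weight_le_pmax[OF assms(1,2)]
    unfolding \<beta>_def \<phi>_def B_def by (simp add: field_simps)
  hence "(1 / \<epsilon>) * l2norm_sq \<mu> (mag_commutator b \<mu> \<theta> \<phi> u) \<le> (1 / \<epsilon>) * (\<beta>\<^sup>2 * l2norm_sq \<mu> u)"
    using assms(6) by (intro mult_left_mono) auto
  ultimately show ?thesis by (simp add: mult.assoc)
qed

theorem proposition5p3:
  fixes b :: "'a \<Rightarrow> 'a \<Rightarrow> real" and \<mu> :: "'a \<Rightarrow> real" and \<theta> :: "'a \<Rightarrow> 'a \<Rightarrow> real"
    and \<mu>0 :: real and x0 :: 'a and u :: "'a \<Rightarrow> complex" and n :: nat and \<epsilon> :: real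
  assumes "weighted_graph b \<mu>" and "graph_connected b"
    and "0 < \<mu>0" and "\<forall>x. \<mu>0 \<le> \<mu> x"
    and "phase_function \<theta>"
    and "in_l2 \<mu> u"
    and "1 \<le> n"
    and "0 < \<epsilon>" and "\<epsilon> < 1"
  shows "let \<beta> = real (dmax b x0 (2 * n)) * pmax b x0 (2 * n) / (\<mu>0 * real n);
             chi = cutoff b x0 n;
             \<Delta> = mag_laplacian b \<mu> \<theta>
         in l2norm_sq \<mu> (\<lambda>x. complex_of_real (chi x) * \<Delta> u x)
            \<le> (1 / (1 - \<epsilon>)) * l2norm_sq \<mu> (\<Delta> (\<lambda>x. complex_of_real (chi x) * u x))
              + ((9 + 4 * \<epsilon>) / ((1 - \<epsilon>) * \<epsilon>)) * \<beta>\<^sup>2 * l2norm_sq \<mu> u"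
proof -
  define \<beta> where "\<beta> = real (dmax b x0 (2 * n)) * pmax b x0 (2 * n) / (\<mu>0 * real n)"
  have "1 / \<epsilon> \<le> (9 + 4 * \<epsilon>) / ((1 - \<epsilon>) * \<epsilon>)"
    using assms(8,9) by (simp add: field_simps)
  moreover have "0 \<le> \<beta>\<^sup>2 * l2norm_sq \<mu> u"
    using assms(1) by (simp add: l2norm_sq_nonneg weighted_graph_def less_imp_le)
  ultimately have "(1 / \<epsilon>) * (\<beta>\<^sup>2 * l2norm_sq \<mu> u)
      \<le> ((9 + 4 * \<epsilon>) / ((1 - \<epsilon>) * \<epsilon>)) * (\<beta>\<^sup>2 * l2norm_sq \<mu> u)"
    by (rule mult_right_mono)
  moreover note l2norm_sq_cutoff_mag_laplacian_le[OF assms(1-4,6,8,9), where ?x0.0 = x0 and n = n and \<theta> = \<theta>]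
  ultimately show ?thesis unfolding Let_def \<beta>_def by (simp add: mult.assoc)
qed

end
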